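(* For every integer $k\ge 2$ there exists a constant $c_k$ depending only on $k$ such that the following holds: if $\Gamma$ is any set of configurations containing at least one configuration $(S,(T_1,T_2))$ with $|S|=k$ (i.e. a $(2,k)$-configuration), then for all positive integers $n,m$ the number $a(n,m,\Gamma)$ of $(n,m)$-elections on the candidate set $\{c_1,\ldots,c_m\}$ avoiding every configuration in $\Gamma$ satisfies $a(n,m,\Gamma)\le m!\cdot c_k^{(n-1)m}$.
   Context: An $(n,m)$-election $(C,\mathcal{P})$ is a set $C$ of $m$ candidates with an ordered $n$-tuple $\mathcal{P}=(V_1,\ldots,V_n)$ of total orders on $C$ (so there are $(m!)^n$ elections on a fixed candidate set; elections differing only in the order of votes are distinct). An $(l,k)$-configuration $(S,\mathcal{T})$ is a set $S$ with $|S|=k$ and a tuple $\mathcal{T}=(T_1,\ldots,T_l)$ of total orders on $S$. The election contains the configuration if there are injective maps $f:\{1,\ldots,l\}\to\{1,\ldots,n\}$ and $g:S\to C$ such that for all distinct $x,y\in S$ and all $i$, $T_i$ ranking $x$ above $y$ implies $V_{f(i)}$ ranks $g(x)$ above $g(y)$; otherwise it avoids the configuration. *)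

theory Defs
  imports Complex_Main
begin

text \<open>A total order on a set A is a relation r with linear_order_on A r;
  x is ranked above y in r iff (x, y) is in r (for distinct x, y).
  Candidates are c_1..c_m, represented by the naturals 0..m-1.\<close>

definition is_election :: "nat \<Rightarrow> nat \<Rightarrow> nat rel list \<Rightarrow> bool" where
  "is_election n m P \<longleftrightarrow> length P = n \<and> (\<forall>V\<in>set P. linear_order_on {0..<m} V)"

definition is_configuration :: "nat set \<times> nat rel list \<Rightarrow> bool" where
  "is_configuration ST \<longleftrightarrow> finite (fst ST) \<and> (\<forall>Ti\<in>set (snd ST). linear_order_on (fst ST) Ti)"

definition contains_config :: "nat \<Rightarrow> nat \<Rightarrow> nat rel list \<Rightarrow> nat set \<times> nat rel list \<Rightarrow> bool" where
  "contains_config n m P ST \<longleftrightarrow>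
     (\<exists>f g. inj_on f {0..<length (snd ST)} \<and> f ` {0..<length (snd ST)} \<subseteq> {0..<n}
        \<and> inj_on g (fst ST) \<and> g ` (fst ST) \<subseteq> {0..<m}
        \<and> (\<forall>i<length (snd ST). \<forall>x\<in>fst ST. \<forall>y\<in>fst ST.
              x \<noteq> y \<longrightarrow> (x, y) \<in> snd ST ! i \<longrightarrow> (g x, g y) \<in> P ! f i))"

definition avoiding_elections :: "nat \<Rightarrow> nat \<Rightarrow> (nat set \<times> nat rel list) set \<Rightarrow> nat rel list set" where
  "avoiding_elections n m \<Gamma> =
     {P. is_election n m P \<and> (\<forall>ST\<in>\<Gamma>. \<not> contains_config n m P ST)}"

end

theory Submission
  imports Defs "HOL-Library.FuncSet" "HOL-Combinatorics.Permutations"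
begin

text \<open>Fix a configuration \<open>(S, [T\<^sub>1, T\<^sub>2])\<close> in \<open>\<Gamma>\<close> with \<open>|S| = k\<close>. Relative to the first vote
  \<open>V\<^sub>0\<close>, every other vote \<open>V\<close> is encoded by the \<open>m \<times> m\<close> permutation matrix
  \<open>{(rank V\<^sub>0 c, rank V c)}\<close>; if the election avoids the configuration, all these matrices avoid
  the \<open>k \<times> k\<close> permutation pattern \<open>{(rank T\<^sub>1 x, rank T\<^sub>2 x) | x \<in> S}\<close>, and the election is
  determined by \<open>V\<^sub>0\<close> (at most \<open>m!\<close> choices) together with them. By the Marcus--Tardos theorem an
  \<open>N \<times> N\<close> 0-1 matrix avoiding a \<open>k \<times> k\<close> permutation pattern has \<open>O(N)\<close> ones, and Klazar's
  contraction argument turns this into at most \<open>c\<^sup>N\<close> avoiding matrices, whence the bound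
  \<open>m! c\<^bsup>(n - 1) m\<^esup>\<close>.\<close>

section \<open>Permutation patterns in point sets\<close>

text \<open>A point set \<open>A\<close> is a 0-1 matrix; it contains the pattern \<open>{(\<rho> d, \<sigma> d) | d \<in> D}\<close> if \<open>D\<close>
  maps into \<open>A\<close> so that strict order of \<open>\<rho>\<close> (of \<open>\<sigma>\<close>) forces strict order of first (second)
  coordinates.\<close>

definition contains_pattern ::
    "(nat \<times> nat) set \<Rightarrow> 'a set \<Rightarrow> ('a \<Rightarrow> nat) \<Rightarrow> ('a \<Rightarrow> nat) \<Rightarrow> bool" where
  "contains_pattern A D \<rho> \<sigma> \<longleftrightarrow> (\<exists>\<phi>. \<phi> ` D \<subseteq> A
     \<and> (\<forall>d\<in>D. \<forall>e\<in>D. \<rho> d < \<rho> e \<longrightarrow> fst (\<phi> d) < fst (\<phi> e))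
     \<and> (\<forall>d\<in>D. \<forall>e\<in>D. \<sigma> d < \<sigma> e \<longrightarrow> snd (\<phi> d) < snd (\<phi> e)))"

lemma contains_patternI:
  assumes "\<phi> ` D \<subseteq> A"
    and "\<And>d e. d \<in> D \<Longrightarrow> e \<in> D \<Longrightarrow> \<rho> d < \<rho> e \<Longrightarrow> fst (\<phi> d) < fst (\<phi> e)"
    and "\<And>d e. d \<in> D \<Longrightarrow> e \<in> D \<Longrightarrow> \<sigma> d < \<sigma> e \<Longrightarrow> snd (\<phi> d) < snd (\<phi> e)"
  shows "contains_pattern A D \<rho> \<sigma>"
  using assms unfolding contains_pattern_def by blast

lemma contains_pattern_swap:
  assumes "contains_pattern (prod.swap ` A) D \<sigma> \<rho>"
  shows "contains_pattern A D \<rho> \<sigma>"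
proof -
  obtain \<phi> where \<phi>: "\<phi> ` D \<subseteq> prod.swap ` A"
    and "\<And>d e. d \<in> D \<Longrightarrow> e \<in> D \<Longrightarrow> \<sigma> d < \<sigma> e \<Longrightarrow> fst (\<phi> d) < fst (\<phi> e)"
    and "\<And>d e. d \<in> D \<Longrightarrow> e \<in> D \<Longrightarrow> \<rho> d < \<rho> e \<Longrightarrow> snd (\<phi> d) < snd (\<phi> e)"
    using assms unfolding contains_pattern_def by blast
  moreover from \<phi> have "(prod.swap \<circ> \<phi>) ` D \<subseteq> A"
    by (auto simp: image_subset_iff image_iff)
  ultimately show ?thesis
    by (intro contains_patternI[of "prod.swap \<circ> \<phi>"]) auto
qed

definition block_of :: "nat \<Rightarrow> nat \<times> nat \<Rightarrow> nat \<times> nat" where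
  "block_of s p = (fst p div s, snd p div s)"

definition block :: "nat \<Rightarrow> (nat \<times> nat) set \<Rightarrow> nat \<times> nat \<Rightarrow> (nat \<times> nat) set" where
  "block s A b = {p \<in> A. block_of s p = b}"

lemma div_less_div_imp_less: "(a::nat) div s < b div s \<Longrightarrow> a < b"
  by (meson div_le_mono not_le)

lemma contains_pattern_contract:
  assumes "contains_pattern (block_of s ` A) D \<rho> \<sigma>"
  shows "contains_pattern A D \<rho> \<sigma>"
proof -
  obtain \<psi> where \<psi>: "\<psi> ` D \<subseteq> block_of s ` A"
    and fst_less: "\<And>d e. d \<in> D \<Longrightarrow> e \<in> D \<Longrightarrow> \<rho> d < \<rho> e \<Longrightarrow> fst (\<psi> d) < fst (\<psi> e)"
    and snd_less: "\<And>d e. d \<in> D \<Longrightarrow> e \<in> D \<Longrightarrow> \<sigma> d < \<sigma> e \<Longrightarrow> snd (\<psi> d) < snd (\<psi> e)"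
    using assms unfolding contains_pattern_def by blast
  from \<psi> obtain \<phi> where \<phi>: "\<And>d. d \<in> D \<Longrightarrow> \<phi> d \<in> A \<and> \<psi> d = block_of s (\<phi> d)"
    unfolding image_subset_iff image_iff by metis
  show ?thesis
  proof (rule contains_patternI[of \<phi>])
    show "\<phi> ` D \<subseteq> A" using \<phi> by blast
  next
    fix d e assume d: "d \<in> D" and e: "e \<in> D"
    then have "\<psi> d = block_of s (\<phi> d)" "\<psi> e = block_of s (\<phi> e)"
      using \<phi> by auto
    then show "\<rho> d < \<rho> e \<Longrightarrow> fst (\<phi> d) < fst (\<phi> e)"
      and "\<sigma> d < \<sigma> e \<Longrightarrow> snd (\<phi> d) < snd (\<phi> e)"
      using fst_less[OF d e] snd_less[OF d e]
      by (auto simp: block_of_def dest: div_less_div_imp_less)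
  qed
qed

lemma block_of_vimage_singleton:
  assumes "s > 0"
  shows "block_of s -` {b} = {fst b * s..<fst b * s + s} \<times> {snd b * s..<snd b * s + s}"
proof -
  have "x div s = i \<longleftrightarrow> i * s \<le> x \<and> x < i * s + s" for x i
  proof
    assume "x div s = i"
    then show "i * s \<le> x \<and> x < i * s + s"
      using dividend_less_div_times[OF assms, of x] by auto
  next
    assume "i * s \<le> x \<and> x < i * s + s"
    then show "x div s = i"
      by (intro div_nat_eqI) (auto simp: mult.commute)
  qed
  then show ?thesis
    by (auto simp: block_of_def prod_eq_iff)
qed

lemma card_block_of_vimage:
  assumes "s > 0" and "finite B"
  shows "finite (block_of s -` B)" and "card (block_of s -` B) = s * s * card B"
proof -
  have vimage_UN: "block_of s -` B = (\<Union>b\<in>B. block_of s -` {b})"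
    by blast
  have card_singleton: "card (block_of s -` {b}) = s * s" for b
    using assms(1) by (simp add: block_of_vimage_singleton card_cartesian_product)
  have finite_singleton: "finite (block_of s -` {b})" for b
    using assms(1) by (simp add: block_of_vimage_singleton)
  show "finite (block_of s -` B)"
    unfolding vimage_UN using assms(2) finite_singleton by simp
  have "card (\<Union>b\<in>B. block_of s -` {b}) = (\<Sum>b\<in>B. card (block_of s -` {b}))"
    using assms(2) finite_singleton by (intro card_UN_disjoint) auto
  then show "card (block_of s -` B) = s * s * card B"
    unfolding vimage_UN by (simp add: card_singleton)
qed

lemma card_block_le:
  assumes "s > 0"
  shows "card (block s A b) \<le> s * s"
proof -
  have "block s A b \<subseteq> block_of s -` {b}"
    unfolding block_def by blast
  then show ?thesis
    using card_mono card_block_of_vimage[OF assms, of "{b}"] by fastforce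
qed

lemma block_of_image_subset:
  assumes "s > 0" and "A \<subseteq> {..<s * N} \<times> {..<s * N}"
  shows "block_of s ` A \<subseteq> {..<N} \<times> {..<N}"
  using assms by (auto simp: block_of_def div_less_iff_less_mult mult.commute)

lemma fst_block_swap: "fst ` block s A (I, J) = snd ` block s (prod.swap ` A) (J, I)"
  unfolding block_def block_of_def by force

section \<open>The Marcus--Tardos bound\<close>

lemma contains_pattern_grid:
  fixes F :: "nat set"
  assumes \<rho>: "\<rho> ` D \<subseteq> {..<k}" and \<sigma>: "\<sigma> ` D \<subseteq> {..<k}"
    and F: "finite F" "k \<le> card F" and C: "finite C" "card C = k"
    and X: "\<And>I. I \<in> F \<Longrightarrow> X I \<subseteq> A \<and> C \<subseteq> snd ` X I"
    and ordered: "\<And>I I' p p'. I \<in> F \<Longrightarrow> I' \<in> F \<Longrightarrow> I < I' \<Longrightarrow> p \<in> X I \<Longrightarrow> p' \<in> X I'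
       \<Longrightarrow> fst p < fst p'"
  shows "contains_pattern A D \<rho> \<sigma>"
proof -
  define rows where "rows = sorted_list_of_set F"
  define cols where "cols = sorted_list_of_set C"
  have rows: "set rows = F" "sorted_wrt (<) rows" "k \<le> length rows"
    using F by (simp_all add: rows_def)
  have cols: "set cols = C" "sorted_wrt (<) cols" "length cols = k"
    using C by (simp_all add: cols_def)
  have \<rho>_less: "\<rho> d < length rows" and \<sigma>_less: "\<sigma> d < length cols" if "d \<in> D" for d
    using \<rho> \<sigma> that rows(3) cols(3) by fastforce+
  have row: "rows ! \<rho> d \<in> F" and col: "cols ! \<sigma> d \<in> C" if "d \<in> D" for d
    using nth_mem[OF \<rho>_less[OF that]] nth_mem[OF \<sigma>_less[OF that]] rows(1) cols(1) by simp_all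
  have "\<exists>p. p \<in> X (rows ! \<rho> d) \<and> snd p = cols ! \<sigma> d" if d: "d \<in> D" for d
  proof -
    have "cols ! \<sigma> d \<in> snd ` X (rows ! \<rho> d)"
      using X[OF row[OF d]] col[OF d] by blast
    then show ?thesis
      by force
  qed
  then obtain \<phi> where \<phi>: "\<And>d. d \<in> D \<Longrightarrow> \<phi> d \<in> X (rows ! \<rho> d) \<and> snd (\<phi> d) = cols ! \<sigma> d"
    by metis
  show ?thesis
  proof (rule contains_patternI[of \<phi>])
    show "\<phi> ` D \<subseteq> A"
      using \<phi> X row by blast
  next
    fix d e assume d: "d \<in> D" and e: "e \<in> D"
    show "fst (\<phi> d) < fst (\<phi> e)" if "\<rho> d < \<rho> e"
    proof -
      have "rows ! \<rho> d < rows ! \<rho> e"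
        using sorted_wrt_nth_less[OF rows(2) that \<rho>_less[OF e]] .
      then show ?thesis
        using ordered[OF row[OF d] row[OF e]] \<phi>[OF d] \<phi>[OF e] by blast
    qed
    show "snd (\<phi> d) < snd (\<phi> e)" if "\<sigma> d < \<sigma> e"
      using sorted_wrt_nth_less[OF cols(2) that \<sigma>_less[OF e]] \<phi>[OF d] \<phi>[OF e] by simp
  qed
qed

text \<open>If more than \<open>(k - 1) * (s choose k)\<close> blocks of one block column contained \<open>k\<close> distinct
  columns each, then by pigeonhole \<open>k\<close> of them would share the same \<open>k\<close> columns, and the
  resulting \<open>k \<times> k\<close> grid contains every pattern of size \<open>k\<close>.\<close>

lemma card_wide_blocks_column_le:
  assumes avoid: "\<not> contains_pattern A D \<rho> \<sigma>"
    and \<rho>: "\<rho> ` D \<subseteq> {..<k}" and \<sigma>: "\<sigma> ` D \<subseteq> {..<k}"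
    and "s > 0" and "finite F" and wide: "\<And>I. I \<in> F \<Longrightarrow> k \<le> card (snd ` block s A (I, J))"
  shows "card F \<le> (k - 1) * (s choose k)"
proof (rule ccontr)
  assume many: "\<not> ?thesis"
  define Y where "Y = {C. C \<subseteq> {J * s..<J * s + s} \<and> card C = k}"
  have card_Y: "card Y = s choose k"
    unfolding Y_def using n_subsets[of "{J * s..<J * s + s}" k] by simp
  have snd_block: "snd ` block s A (I, J) \<subseteq> {J * s..<J * s + s}" for I
    using block_of_vimage_singleton[OF \<open>s > 0\<close>, of "(I, J)"] unfolding block_def by auto
  have "\<forall>I\<in>F. \<exists>G. G \<subseteq> snd ` block s A (I, J) \<and> card G = k"
    using wide by (meson obtain_subset_with_card_n)
  then obtain g where g: "\<And>I. I \<in> F \<Longrightarrow> g I \<subseteq> snd ` block s A (I, J) \<and> card (g I) = k"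
    by metis
  then have g_Y: "g \<in> F \<rightarrow> Y"
    using snd_block unfolding Y_def by blast
  moreover have "F \<noteq> {}"
    using many by auto
  ultimately have "Y \<noteq> {}"
    by blast
  moreover have "finite Y"
    unfolding Y_def by (rule finite_subset[of _ "Pow {J * s..<J * s + s}"]) auto
  ultimately obtain C where C: "C \<in> Y" "card F \<le> card (g -` {C} \<inter> F) * card Y"
    using pigeonhole_card[OF g_Y \<open>finite F\<close>] by blast
  define F' where "F' = g -` {C} \<inter> F"
  have "(k - 1) * card Y < card F' * card Y"
    using C(2) many unfolding F'_def card_Y by linarith
  then have "k \<le> card F'"
    by (simp only: mult_less_cancel2) linarith
  have "contains_pattern A D \<rho> \<sigma>"
  proof (rule contains_pattern_grid[OF \<rho> \<sigma>, where F = F' and C = C and X = "\<lambda>I. block s A (I, J)"])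
    show "finite F'" "k \<le> card F'"
      using \<open>finite F\<close> \<open>k \<le> card F'\<close> unfolding F'_def by simp_all
    show "finite C" "card C = k"
      using C(1) unfolding Y_def by (auto intro: finite_subset)
    show "block s A (I, J) \<subseteq> A \<and> C \<subseteq> snd ` block s A (I, J)" if "I \<in> F'" for I
      using g that unfolding F'_def block_def by auto
    show "fst p < fst p'" if "I < I'" "p \<in> block s A (I, J)" "p' \<in> block s A (I', J)" for I I' p p'
      using that by (auto simp: block_def block_of_def dest: div_less_div_imp_less)
  qed
  with avoid show False ..
qed

lemma card_wide_blocks_le:
  assumes avoid: "\<not> contains_pattern A D \<rho> \<sigma>"
    and \<rho>: "\<rho> ` D \<subseteq> {..<k}" and \<sigma>: "\<sigma> ` D \<subseteq> {..<k}" and "s > 0"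
  shows "card {b \<in> {..<N} \<times> {..<N}. k \<le> card (snd ` block s A b)} \<le> N * ((k - 1) * (s choose k))"
proof -
  let ?F = "\<lambda>J. {I \<in> {..<N}. k \<le> card (snd ` block s A (I, J))}"
  have "card {b \<in> {..<N} \<times> {..<N}. k \<le> card (snd ` block s A b)}
      = card (\<Union>J<N. (\<lambda>I. (I, J)) ` ?F J)"
    by (intro arg_cong[where f = card]) auto
  also have "\<dots> \<le> (\<Sum>J<N. card ((\<lambda>I. (I, J)) ` ?F J))"
    by (rule card_UN_le) simp
  also have "\<dots> \<le> (\<Sum>J<N. (k - 1) * (s choose k))"
  proof (rule sum_mono)
    fix J
    have "card ((\<lambda>I. (I, J)) ` ?F J) \<le> card (?F J)"
      by (rule card_image_le) simp
    also have "\<dots> \<le> (k - 1) * (s choose k)"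
      by (rule card_wide_blocks_column_le[OF avoid \<rho> \<sigma> \<open>s > 0\<close>]) auto
    finally show "card ((\<lambda>I. (I, J)) ` ?F J) \<le> (k - 1) * (s choose k)" .
  qed
  finally show ?thesis
    by simp
qed

lemma card_tall_blocks_le:
  assumes avoid: "\<not> contains_pattern A D \<rho> \<sigma>"
    and \<rho>: "\<rho> ` D \<subseteq> {..<k}" and \<sigma>: "\<sigma> ` D \<subseteq> {..<k}" and "s > 0"
  shows "card {b \<in> {..<N} \<times> {..<N}. k \<le> card (fst ` block s A b)} \<le> N * ((k - 1) * (s choose k))"
proof -
  let ?wide = "{b \<in> {..<N} \<times> {..<N}. k \<le> card (snd ` block s (prod.swap ` A) b)}"
  have "\<not> contains_pattern (prod.swap ` A) D \<sigma> \<rho>"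
    using avoid contains_pattern_swap by blast
  then have "card ?wide \<le> N * ((k - 1) * (s choose k))"
    by (rule card_wide_blocks_le[OF _ \<sigma> \<rho> \<open>s > 0\<close>])
  moreover have "{b \<in> {..<N} \<times> {..<N}. k \<le> card (fst ` block s A b)} \<subseteq> prod.swap ` ?wide"
    by (force simp: fst_block_swap)
  then have "card {b \<in> {..<N} \<times> {..<N}. k \<le> card (fst ` block s A b)} \<le> card ?wide"
    using card_mono[of "prod.swap ` ?wide"] by (simp add: card_image)
  ultimately show ?thesis
    by linarith
qed

lemma card_wide_or_tall_blocks_le:
  assumes avoid: "\<not> contains_pattern A D \<rho> \<sigma>"
    and \<rho>: "\<rho> ` D \<subseteq> {..<k}" and \<sigma>: "\<sigma> ` D \<subseteq> {..<k}" and "s > 0"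
    and "B \<subseteq> {..<N} \<times> {..<N}"
  shows "card {b \<in> B. k \<le> card (fst ` block s A b) \<or> k \<le> card (snd ` block s A b)}
    \<le> 2 * (N * ((k - 1) * (s choose k)))"
proof -
  let ?tall = "{b \<in> {..<N} \<times> {..<N}. k \<le> card (fst ` block s A b)}"
  let ?wide = "{b \<in> {..<N} \<times> {..<N}. k \<le> card (snd ` block s A b)}"
  have "{b \<in> B. k \<le> card (fst ` block s A b) \<or> k \<le> card (snd ` block s A b)} \<subseteq> ?tall \<union> ?wide"
    using \<open>B \<subseteq> {..<N} \<times> {..<N}\<close> by blast
  moreover have "finite (?tall \<union> ?wide)"
    by (rule finite_subset[of _ "{..<N} \<times> {..<N}"]) auto
  ultimately have "card {b \<in> B. k \<le> card (fst ` block s A b) \<or> k \<le> card (snd ` block s A b)}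
      \<le> card (?tall \<union> ?wide)"
    by (rule card_mono[rotated])
  also have "\<dots> \<le> card ?tall + card ?wide"
    by (rule card_Un_le)
  also have "\<dots> \<le> 2 * (N * ((k - 1) * (s choose k)))"
    using card_tall_blocks_le[OF avoid \<rho> \<sigma> \<open>s > 0\<close>, of N]
      card_wide_blocks_le[OF avoid \<rho> \<sigma> \<open>s > 0\<close>, of N] by linarith
  finally show ?thesis .
qed

lemma card_le_by_blocks:
  fixes s k :: nat
  assumes "finite A" and "s > 0"
  defines "W \<equiv> {b \<in> block_of s ` A. k \<le> card (fst ` block s A b) \<or> k \<le> card (snd ` block s A b)}"
  shows "card A \<le> card (block_of s ` A) * ((k - 1) * (k - 1)) + card W * (s * s)"
proof -
  let ?B = "block_of s ` A"
  have "W \<subseteq> ?B" "finite ?B"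
    using \<open>finite A\<close> unfolding W_def by auto
  then have "finite W"
    by (rule finite_subset)
  have "card A = card (\<Union>b\<in>?B. block s A b)"
    unfolding block_def by (intro arg_cong[where f = card]) blast
  also have "\<dots> \<le> (\<Sum>b\<in>?B. card (block s A b))"
    using \<open>finite A\<close> by (intro card_UN_le) simp
  also have "\<dots> = (\<Sum>b\<in>?B - W. card (block s A b)) + (\<Sum>b\<in>W. card (block s A b))"
    using \<open>W \<subseteq> ?B\<close> \<open>finite ?B\<close> \<open>finite W\<close> by (intro sum.subset_diff)
  also have "\<dots> \<le> card (?B - W) * ((k - 1) * (k - 1)) + card W * (s * s)"
  proof (intro add_mono)
    have "card (block s A b) \<le> (k - 1) * (k - 1)" if "b \<in> ?B - W" for b
    proof -
      have "finite (block s A b)"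
        using \<open>finite A\<close> unfolding block_def by simp
      then have "card (block s A b) \<le> card (fst ` block s A b \<times> snd ` block s A b)"
        by (intro card_mono) (auto simp: subset_fst_snd)
      also have "\<dots> \<le> (k - 1) * (k - 1)"
        using that unfolding W_def card_cartesian_product by (intro mult_le_mono) auto
      finally show ?thesis .
    qed
    then show "(\<Sum>b\<in>?B - W. card (block s A b)) \<le> card (?B - W) * ((k - 1) * (k - 1))"
      using sum_bounded_above[of "?B - W" "\<lambda>b. card (block s A b)"] by simp
    show "(\<Sum>b\<in>W. card (block s A b)) \<le> card W * (s * s)"
      using sum_bounded_above[of W "\<lambda>b. card (block s A b)"] card_block_le[OF \<open>s > 0\<close>] by simp
  qed
  also have "\<dots> \<le> card ?B * ((k - 1) * (k - 1)) + card W * (s * s)"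
    using card_mono[OF \<open>finite ?B\<close>, of "?B - W"] by auto
  finally show ?thesis .
qed

definition marcus_tardos_const :: "nat \<Rightarrow> nat" where
  "marcus_tardos_const k = 2 * k ^ 5 * (k\<^sup>2 choose k)"

lemma marcus_tardos_const_pos: "k \<ge> 1 \<Longrightarrow> marcus_tardos_const k > 0"
  by (simp add: marcus_tardos_const_def zero_less_binomial power2_eq_square)

lemma marcus_tardos_const_step:
  assumes "k \<ge> 1"
  shows "marcus_tardos_const k * ((k - 1) * (k - 1)) + 2 * ((k - 1) * (k\<^sup>2 choose k)) * (k\<^sup>2 * k\<^sup>2)
    \<le> marcus_tardos_const k * k\<^sup>2"
proof -
  define d where "d = k - 1"
  have "k * (d * d) + d \<le> k ^ 3"
    using assms unfolding d_def by (cases k) (simp_all add: power3_eq_cube algebra_simps)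
  then have "2 * (k\<^sup>2 choose k) * k ^ 4 * (k * (d * d) + d) \<le> 2 * (k\<^sup>2 choose k) * k ^ 4 * k ^ 3"
    by (rule mult_le_mono2)
  then show ?thesis
    unfolding marcus_tardos_const_def d_def[symmetric] by (simp add: eval_nat_numeral algebra_simps)
qed

text \<open>Induction on \<open>j\<close> with blocks of side \<open>s = k\<^sup>2\<close>: the contraction of \<open>A\<close> still avoids the
  pattern, so \<open>A\<close> meets at most \<open>c N\<close> blocks. Those with fewer than \<open>k\<close> distinct rows and columns
  hold at most \<open>(k - 1)\<^sup>2\<close> points each, and the others are at most \<open>2 N (k - 1) (s choose k)\<close>
  in number.\<close>

theorem marcus_tardos:
  assumes "k \<ge> 1" and \<rho>: "\<rho> ` D \<subseteq> {..<k}" and \<sigma>: "\<sigma> ` D \<subseteq> {..<k}"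
    and "A \<subseteq> {..<(k\<^sup>2) ^ j} \<times> {..<(k\<^sup>2) ^ j}" and "\<not> contains_pattern A D \<rho> \<sigma>"
  shows "card A \<le> marcus_tardos_const k * (k\<^sup>2) ^ j"
  using assms(4,5)
proof (induction j arbitrary: A)
  case 0
  then have "card A \<le> card {(0::nat, 0::nat)}"
    by (intro card_mono) auto
  also have "\<dots> \<le> marcus_tardos_const k"
    using marcus_tardos_const_pos[OF \<open>k \<ge> 1\<close>] by simp
  finally show ?case
    by simp
next
  case (Suc j A)
  define s where "s = k\<^sup>2"
  define N where "N = (k\<^sup>2) ^ j"
  let ?B = "block_of s ` A"
  define W where "W = {b \<in> ?B. k \<le> card (fst ` block s A b) \<or> k \<le> card (snd ` block s A b)}"
  have "s > 0"
    using \<open>k \<ge> 1\<close> by (simp add: s_def)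
  have A_sub: "A \<subseteq> {..<s * N} \<times> {..<s * N}"
    using Suc.prems(1) by (simp add: s_def N_def)
  then have B_sub: "?B \<subseteq> {..<N} \<times> {..<N}"
    by (rule block_of_image_subset[OF \<open>s > 0\<close>])
  have "\<not> contains_pattern ?B D \<rho> \<sigma>"
    using Suc.prems(2) contains_pattern_contract by blast
  with B_sub have card_B: "card ?B \<le> marcus_tardos_const k * N"
    unfolding N_def by (rule Suc.IH)
  have card_W: "card W \<le> 2 * (N * ((k - 1) * (s choose k)))"
    unfolding W_def by (rule card_wide_or_tall_blocks_le[OF Suc.prems(2) \<rho> \<sigma> \<open>s > 0\<close> B_sub])
  have "finite A"
    using A_sub by (rule finite_subset) simp
  then have "card A \<le> card ?B * ((k - 1) * (k - 1)) + card W * (s * s)"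
    unfolding W_def using \<open>s > 0\<close> by (rule card_le_by_blocks)
  also have "\<dots> \<le> marcus_tardos_const k * N * ((k - 1) * (k - 1))
      + 2 * (N * ((k - 1) * (s choose k))) * (s * s)"
    using card_B card_W by (intro add_mono mult_le_mono1)
  also have "\<dots> = N * (marcus_tardos_const k * ((k - 1) * (k - 1))
      + 2 * ((k - 1) * (k\<^sup>2 choose k)) * (k\<^sup>2 * k\<^sup>2))"
    by (simp only: s_def add_mult_distrib2 ac_simps)
  also have "\<dots> \<le> N * (marcus_tardos_const k * k\<^sup>2)"
    using marcus_tardos_const_step[OF \<open>k \<ge> 1\<close>] by (rule mult_le_mono2)
  finally show ?case
    by (simp only: N_def power_Suc ac_simps)
qed

section \<open>Klazar's counting argument\<close>

definition avoiders :: "nat \<Rightarrow> 'a set \<Rightarrow> ('a \<Rightarrow> nat) \<Rightarrow> ('a \<Rightarrow> nat) \<Rightarrow> (nat \<times> nat) set set" where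
  "avoiders N D \<rho> \<sigma> = {A. A \<subseteq> {..<N} \<times> {..<N} \<and> \<not> contains_pattern A D \<rho> \<sigma>}"

lemma finite_avoiders: "finite (avoiders N D \<rho> \<sigma>)"
  by (rule finite_subset[of _ "Pow ({..<N} \<times> {..<N})"]) (auto simp: avoiders_def)

lemma avoiders_mono: "N \<le> N' \<Longrightarrow> avoiders N D \<rho> \<sigma> \<subseteq> avoiders N' D \<rho> \<sigma>"
  by (auto simp: avoiders_def)

text \<open>Every avoider of size \<open>s * N\<close> is a subset of the blow-up of its contraction, which is an
  avoider of size \<open>N\<close>.\<close>

lemma card_avoiders_mult_le:
  assumes "s > 0" and bound: "\<And>B. B \<in> avoiders N D \<rho> \<sigma> \<Longrightarrow> card B \<le> M"
  shows "card (avoiders (s * N) D \<rho> \<sigma>) \<le> card (avoiders N D \<rho> \<sigma>) * 2 ^ (s * s * M)"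
proof -
  have blow_up: "finite (block_of s -` B) \<and> card (Pow (block_of s -` B)) \<le> 2 ^ (s * s * M)"
    if B: "B \<in> avoiders N D \<rho> \<sigma>" for B
  proof -
    have "finite B"
      using B unfolding avoiders_def by (auto intro: finite_subset)
    then have "finite (block_of s -` B)" "card (block_of s -` B) \<le> s * s * M"
      using card_block_of_vimage[OF \<open>s > 0\<close>] bound[OF B] by simp_all
    then show ?thesis
      by (simp add: card_Pow power_increasing)
  qed
  have "avoiders (s * N) D \<rho> \<sigma> \<subseteq> (\<Union>B\<in>avoiders N D \<rho> \<sigma>. Pow (block_of s -` B))"
  proof
    fix A assume A: "A \<in> avoiders (s * N) D \<rho> \<sigma>"
    then have "block_of s ` A \<subseteq> {..<N} \<times> {..<N}"
      using block_of_image_subset[OF \<open>s > 0\<close>] unfolding avoiders_def by blast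
    moreover have "\<not> contains_pattern (block_of s ` A) D \<rho> \<sigma>"
      using A contains_pattern_contract unfolding avoiders_def by blast
    ultimately have "block_of s ` A \<in> avoiders N D \<rho> \<sigma>"
      unfolding avoiders_def by blast
    then show "A \<in> (\<Union>B\<in>avoiders N D \<rho> \<sigma>. Pow (block_of s -` B))"
      by blast
  qed
  then have "card (avoiders (s * N) D \<rho> \<sigma>) \<le> card (\<Union>B\<in>avoiders N D \<rho> \<sigma>. Pow (block_of s -` B))"
    using blow_up by (intro card_mono finite_UN_I finite_avoiders) auto
  also have "\<dots> \<le> (\<Sum>B\<in>avoiders N D \<rho> \<sigma>. card (Pow (block_of s -` B)))"
    by (rule card_UN_le[OF finite_avoiders])
  also have "\<dots> \<le> card (avoiders N D \<rho> \<sigma>) * 2 ^ (s * s * M)"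
    using sum_bounded_above[of "avoiders N D \<rho> \<sigma>" "\<lambda>B. card (Pow (block_of s -` B))"] blow_up
    by simp
  finally show ?thesis .
qed

definition klazar_const :: "nat \<Rightarrow> nat" where
  "klazar_const k = k ^ 4 * marcus_tardos_const k"

lemma card_avoiders_power_le:
  assumes "k \<ge> 2" and \<rho>: "\<rho> ` D \<subseteq> {..<k}" and \<sigma>: "\<sigma> ` D \<subseteq> {..<k}"
  shows "card (avoiders ((k\<^sup>2) ^ j) D \<rho> \<sigma>) \<le> 2 ^ (klazar_const k * (k\<^sup>2) ^ j)"
proof (induction j)
  case 0
  have "card (avoiders 1 D \<rho> \<sigma>) \<le> card (Pow {(0::nat, 0::nat)})"
    by (intro card_mono) (auto simp: avoiders_def)
  also have "\<dots> = 2 ^ 1"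
    by (simp add: card_Pow)
  also have "\<dots> \<le> 2 ^ klazar_const k"
    using marcus_tardos_const_pos[of k] \<open>k \<ge> 2\<close>
    by (intro power_increasing) (simp_all add: klazar_const_def Suc_le_eq)
  finally show ?case
    by simp
next
  case (Suc j)
  define s where "s = k\<^sup>2"
  define N where "N = (k\<^sup>2) ^ j"
  have "s \<ge> 2"
    using \<open>k \<ge> 2\<close> le_square[of k] unfolding s_def power2_eq_square by linarith
  have "card (avoiders (s * N) D \<rho> \<sigma>)
      \<le> card (avoiders N D \<rho> \<sigma>) * 2 ^ (s * s * (marcus_tardos_const k * N))"
  proof (rule card_avoiders_mult_le)
    show "card B \<le> marcus_tardos_const k * N" if "B \<in> avoiders N D \<rho> \<sigma>" for B
      using that \<open>k \<ge> 2\<close> marcus_tardos[OF _ \<rho> \<sigma>]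
      unfolding avoiders_def N_def by simp
  qed (use \<open>s \<ge> 2\<close> in simp)
  also have "\<dots> = card (avoiders N D \<rho> \<sigma>) * 2 ^ (klazar_const k * N)"
    by (simp add: s_def klazar_const_def mult.assoc flip: power_add)
  also have "\<dots> \<le> 2 ^ (klazar_const k * N) * 2 ^ (klazar_const k * N)"
    using Suc.IH unfolding N_def by (rule mult_le_mono1)
  also have "\<dots> = 2 ^ (2 * (klazar_const k * N))"
    by (simp flip: power_add)
  also have "\<dots> \<le> 2 ^ (klazar_const k * (s * N))"
    using \<open>s \<ge> 2\<close> by (intro power_increasing) simp_all
  finally show ?case
    by (simp add: s_def N_def)
qed

lemma exists_power_between:
  fixes s N :: nat
  assumes "s \<ge> 2" and "N \<ge> 1"
  obtains j where "N \<le> s ^ j" and "s ^ j \<le> s * N"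
proof -
  have "N \<le> s ^ N"
    using less_exp[of N] power_mono[of 2 s N] \<open>s \<ge> 2\<close> by simp
  then have least: "N \<le> s ^ (LEAST j. N \<le> s ^ j)"
    by (rule LeastI)
  have "s ^ (LEAST j. N \<le> s ^ j) \<le> s * N"
  proof (cases "LEAST j. N \<le> s ^ j")
    case 0
    then show ?thesis
      using \<open>N \<ge> 1\<close> \<open>s \<ge> 2\<close> by simp
  next
    case (Suc i)
    then have "\<not> N \<le> s ^ i"
      using not_less_Least[of i "\<lambda>j. N \<le> s ^ j"] by simp
    then show ?thesis
      using Suc by simp
  qed
  with least show thesis
    by (rule that)
qed

theorem card_avoiders_le:
  assumes "k \<ge> 2" and \<rho>: "\<rho> ` D \<subseteq> {..<k}" and \<sigma>: "\<sigma> ` D \<subseteq> {..<k}" and "N > 0"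
  shows "card (avoiders N D \<rho> \<sigma>) \<le> (2 ^ (klazar_const k * k\<^sup>2)) ^ N"
proof -
  have "k\<^sup>2 \<ge> 2"
    using \<open>k \<ge> 2\<close> le_square[of k] unfolding power2_eq_square by linarith
  then obtain j where j: "N \<le> (k\<^sup>2) ^ j" "(k\<^sup>2) ^ j \<le> k\<^sup>2 * N"
    using \<open>N > 0\<close> exists_power_between[of "k\<^sup>2" N] by auto
  have "card (avoiders N D \<rho> \<sigma>) \<le> card (avoiders ((k\<^sup>2) ^ j) D \<rho> \<sigma>)"
    using avoiders_mono[OF j(1)] finite_avoiders by (rule card_mono[rotated])
  also have "\<dots> \<le> 2 ^ (klazar_const k * (k\<^sup>2) ^ j)"
    by (rule card_avoiders_power_le[OF \<open>k \<ge> 2\<close> \<rho> \<sigma>])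
  also have "\<dots> \<le> 2 ^ (klazar_const k * (k\<^sup>2 * N))"
    using j(2) by (intro power_increasing mult_le_mono2) simp_all
  finally show ?thesis
    by (simp add: power_mult mult.assoc)
qed

section \<open>Ranks in finite linear orders\<close>

definition rank :: "'a rel \<Rightarrow> 'a \<Rightarrow> nat" where
  "rank V x = card {y. (x, y) \<in> V \<and> y \<noteq> x}"

lemma linear_order_onD:
  assumes "linear_order_on A V"
  shows "V \<subseteq> A \<times> A" and "x \<in> A \<Longrightarrow> (x, x) \<in> V" and "trans V" and "antisym V"
    and "x \<in> A \<Longrightarrow> y \<in> A \<Longrightarrow> x \<noteq> y \<Longrightarrow> (x, y) \<in> V \<or> (y, x) \<in> V"
  using assms unfolding linear_order_on_def partial_order_on_def preorder_on_def refl_on_def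
    total_on_def by auto

lemma rank_less_card:
  assumes "linear_order_on A V" and "finite A" and "x \<in> A"
  shows "rank V x < card A"
proof -
  have "{y. (x, y) \<in> V \<and> y \<noteq> x} \<subseteq> A - {x}"
    using linear_order_onD(1)[OF assms(1)] by blast
  then have "rank V x \<le> card (A - {x})"
    unfolding rank_def using assms(2) by (intro card_mono) auto
  then show ?thesis
    using card_Diff1_less[OF assms(2,3)] by linarith
qed

lemma rank_less_rank:
  assumes lo: "linear_order_on A V" and "finite A" and "x \<noteq> y" and "(x, y) \<in> V"
  shows "rank V y < rank V x"
proof -
  have "{z. (y, z) \<in> V \<and> z \<noteq> y} \<subset> {z. (x, z) \<in> V \<and> z \<noteq> x}"
  proof
    show "{z. (y, z) \<in> V \<and> z \<noteq> y} \<subseteq> {z. (x, z) \<in> V \<and> z \<noteq> x}"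
      using assms(3,4) linear_order_onD(3,4)[OF lo] unfolding trans_def antisym_def by blast
    show "{z. (y, z) \<in> V \<and> z \<noteq> y} \<noteq> {z. (x, z) \<in> V \<and> z \<noteq> x}"
      using assms(3,4) by blast
  qed
  moreover have "finite {z. (x, z) \<in> V \<and> z \<noteq> x}"
    using linear_order_onD(1)[OF lo] \<open>finite A\<close> by (auto intro: finite_subset)
  ultimately show ?thesis
    unfolding rank_def by (rule psubset_card_mono[rotated])
qed

lemma rank_less_rank_iff:
  assumes "linear_order_on A V" and "finite A" and "x \<in> A" and "y \<in> A"
  shows "rank V y < rank V x \<longleftrightarrow> x \<noteq> y \<and> (x, y) \<in> V"
  using rank_less_rank[OF assms(1,2)] linear_order_onD(5)[OF assms(1,3,4)]
  by (metis less_asym less_irrefl)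

lemma inj_on_rank:
  assumes "linear_order_on A V" and "finite A"
  shows "inj_on (rank V) A"
  using rank_less_rank[OF assms] linear_order_onD(5)[OF assms(1)]
  by (metis inj_onI less_irrefl)

lemma mem_linear_order_iff_rank:
  assumes "linear_order_on A V" and "finite A"
  shows "(x, y) \<in> V \<longleftrightarrow> x \<in> A \<and> y \<in> A \<and> rank V y \<le> rank V x"
proof (cases "x \<in> A \<and> y \<in> A \<and> x \<noteq> y")
  case True
  then have "rank V y \<noteq> rank V x"
    using inj_on_rank[OF assms] by (metis inj_onD)
  then show ?thesis
    using rank_less_rank_iff[OF assms, of x y] True by (auto simp: le_less)
next
  case False
  then show ?thesis
    using linear_order_onD(1,2)[OF assms(1)] by auto
qed

lemma linear_order_eq_if_rank_eq:
  assumes "linear_order_on A V" and "linear_order_on A V'" and "finite A"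
    and "\<And>x. x \<in> A \<Longrightarrow> rank V x = rank V' x"
  shows "V = V'"
proof (intro set_eqI)
  fix p :: "'a \<times> 'a"
  obtain x y where "p = (x, y)"
    by (cases p)
  then show "p \<in> V \<longleftrightarrow> p \<in> V'"
    using mem_linear_order_iff_rank[OF assms(1,3)] mem_linear_order_iff_rank[OF assms(2,3)] assms(4)
    by auto
qed

lemma rank_mono_imp_order_embedding:
  assumes T: "linear_order_on S T" "finite S" and V: "linear_order_on B V" "finite B"
    and "g ` S \<subseteq> B"
    and mono: "\<And>d e. d \<in> S \<Longrightarrow> e \<in> S \<Longrightarrow> rank T d < rank T e \<Longrightarrow> rank V (g d) < rank V (g e)"
  shows "inj_on g S"
    and "\<And>x y. x \<in> S \<Longrightarrow> y \<in> S \<Longrightarrow> x \<noteq> y \<Longrightarrow> (x, y) \<in> T \<Longrightarrow> (g x, g y) \<in> V"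
proof -
  show "inj_on g S"
  proof (rule inj_onI)
    fix d e assume "d \<in> S" "e \<in> S" "g d = g e"
    with mono have "\<not> rank T d < rank T e" "\<not> rank T e < rank T d"
      by (metis less_irrefl)+
    with inj_on_rank[OF T] \<open>d \<in> S\<close> \<open>e \<in> S\<close> show "d = e"
      by (metis inj_onD linorder_cases)
  qed
  fix x y assume xy: "x \<in> S" "y \<in> S" "x \<noteq> y" "(x, y) \<in> T"
  then have "rank V (g y) < rank V (g x)"
    using mono rank_less_rank[OF T] by blast
  then show "(g x, g y) \<in> V"
    using rank_less_rank_iff[OF V] \<open>g ` S \<subseteq> B\<close> xy(1,2) by blast
qed

lemma card_linear_orders_le: "card {V. linear_order_on {0..<m} V} \<le> fact m"
proof -
  define \<pi> where "\<pi> V x = (if x < m then rank V x else x)" for V x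
  have "\<pi> V permutes {0..<m}" if lo: "linear_order_on {0..<m} V" for V
  proof (rule inj_imp_permutes)
    show "inj_on (\<pi> V) {0..<m}"
      using inj_on_rank[OF lo] by (auto simp: \<pi>_def inj_on_def)
    show "\<pi> V x \<in> {0..<m}" if "x \<in> {0..<m}" for x
      using rank_less_card[OF lo _ that] that by (simp add: \<pi>_def)
  qed (simp_all add: \<pi>_def)
  moreover have "inj_on \<pi> {V. linear_order_on {0..<m} V}"
  proof (rule inj_onI)
    fix V V' assume "V \<in> {V. linear_order_on {0..<m} V}" "V' \<in> {V. linear_order_on {0..<m} V}"
      and eq: "\<pi> V = \<pi> V'"
    moreover have "rank V x = rank V' x" if "x \<in> {0..<m}" for x
      using fun_cong[OF eq, of x] that by (simp add: \<pi>_def)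
    ultimately show "V = V'"
      by (intro linear_order_eq_if_rank_eq[of "{0..<m}"]) auto
  qed
  ultimately have "card {V. linear_order_on {0..<m} V} \<le> card {p. p permutes {0..<m}}"
    by (intro card_inj_on_le) (auto simp: finite_permutations)
  also have "\<dots> = fact m"
    by (simp add: card_permutations)
  finally show ?thesis .
qed

section \<open>Elections as tuples of permutation matrices\<close>

definition relative_perm_matrix :: "nat \<Rightarrow> nat rel \<Rightarrow> nat rel \<Rightarrow> (nat \<times> nat) set" where
  "relative_perm_matrix m V0 V = (\<lambda>x. (rank V0 x, rank V x)) ` {0..<m}"

lemma relative_perm_matrix_subset:
  assumes "linear_order_on {0..<m} V0" and "linear_order_on {0..<m} V"
  shows "relative_perm_matrix m V0 V \<subseteq> {..<m} \<times> {..<m}"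
  using rank_less_card[OF assms(1)] rank_less_card[OF assms(2)]
  by (auto simp: relative_perm_matrix_def)

lemma inj_on_relative_perm_matrix:
  assumes "linear_order_on {0..<m} V0"
  shows "inj_on (relative_perm_matrix m V0) {V. linear_order_on {0..<m} V}"
proof (rule inj_onI)
  fix V V'
  assume V: "V \<in> {V. linear_order_on {0..<m} V}" and V': "V' \<in> {V. linear_order_on {0..<m} V}"
    and eq: "relative_perm_matrix m V0 V = relative_perm_matrix m V0 V'"
  have "rank V x = rank V' x" if x: "x \<in> {0..<m}" for x
  proof -
    have "(rank V0 x, rank V x) \<in> relative_perm_matrix m V0 V'"
      using eq x unfolding relative_perm_matrix_def by blast
    then obtain x' where "x' \<in> {0..<m}" "rank V0 x = rank V0 x'" "rank V x = rank V' x'"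
      unfolding relative_perm_matrix_def by auto
    with inj_on_rank[OF assms] x show ?thesis
      by (metis finite_atLeastLessThan inj_onD)
  qed
  with V V' show "V = V'"
    by (intro linear_order_eq_if_rank_eq[of "{0..<m}"]) auto
qed

text \<open>An occurrence of the pattern picks one candidate per element of \<open>S\<close>, ranked in \<open>V\<^sub>i\<close> and
  \<open>V\<^sub>j\<close> like its preimage in \<open>T\<^sub>1\<close> and \<open>T\<^sub>2\<close>; since ranks determine a linear order, these
  candidates form a copy of the configuration.\<close>

lemma contains_config_if_contains_pattern:
  assumes P: "is_election n m P" and "i < n" and "j < n" and "i \<noteq> j"
    and T1: "linear_order_on S T1" and T2: "linear_order_on S T2" and "finite S"
    and "contains_pattern (relative_perm_matrix m (P ! i) (P ! j)) S (rank T1) (rank T2)"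
  shows "contains_config n m P (S, [T1, T2])"
proof -
  have Vi: "linear_order_on {0..<m} (P ! i)" and Vj: "linear_order_on {0..<m} (P ! j)"
    using P \<open>i < n\<close> \<open>j < n\<close> unfolding is_election_def by auto
  obtain \<phi> where \<phi>: "\<phi> ` S \<subseteq> relative_perm_matrix m (P ! i) (P ! j)"
    and fst_less: "\<And>d e. d \<in> S \<Longrightarrow> e \<in> S \<Longrightarrow> rank T1 d < rank T1 e \<Longrightarrow> fst (\<phi> d) < fst (\<phi> e)"
    and snd_less: "\<And>d e. d \<in> S \<Longrightarrow> e \<in> S \<Longrightarrow> rank T2 d < rank T2 e \<Longrightarrow> snd (\<phi> d) < snd (\<phi> e)"
    using assms(8) unfolding contains_pattern_def by blast
  then obtain g
    where g: "\<And>d. d \<in> S \<Longrightarrow> g d \<in> {0..<m} \<and> \<phi> d = (rank (P ! i) (g d), rank (P ! j) (g d))"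
    unfolding relative_perm_matrix_def image_subset_iff image_iff by metis
  have "g ` S \<subseteq> {0..<m}"
    using g by blast
  have mono1: "rank (P ! i) (g d) < rank (P ! i) (g e)"
    if "d \<in> S" "e \<in> S" "rank T1 d < rank T1 e" for d e
    using fst_less[OF that] g that(1,2) by simp
  have mono2: "rank (P ! j) (g d) < rank (P ! j) (g e)"
    if "d \<in> S" "e \<in> S" "rank T2 d < rank T2 e" for d e
    using snd_less[OF that] g that(1,2) by simp
  note embedding1 = rank_mono_imp_order_embedding[OF T1 \<open>finite S\<close> Vi finite_atLeastLessThan
      \<open>g ` S \<subseteq> {0..<m}\<close> mono1]
  note embedding2 = rank_mono_imp_order_embedding[OF T2 \<open>finite S\<close> Vj finite_atLeastLessThan
      \<open>g ` S \<subseteq> {0..<m}\<close> mono2]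
  let ?f = "\<lambda>t::nat. if t = 0 then i else j"
  have "inj_on ?f {0..<length [T1, T2]}" "?f ` {0..<length [T1, T2]} \<subseteq> {0..<n}"
    using \<open>i \<noteq> j\<close> \<open>i < n\<close> \<open>j < n\<close> by (auto simp: inj_on_def)
  moreover have "\<forall>t<length [T1, T2]. \<forall>x\<in>S. \<forall>y\<in>S.
      x \<noteq> y \<longrightarrow> (x, y) \<in> [T1, T2] ! t \<longrightarrow> (g x, g y) \<in> P ! ?f t"
    using embedding1(2) embedding2(2) by (auto simp: less_2_cases_iff)
  ultimately show ?thesis
    unfolding contains_config_def using embedding1(1) \<open>g ` S \<subseteq> {0..<m}\<close>
    by (intro exI[of _ ?f] exI[of _ g]) auto
qed

lemma finite_elections: "finite {P. is_election n m P}"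
proof (rule finite_subset)
  show "{P. is_election n m P} \<subseteq> {P. set P \<subseteq> Pow ({0..<m} \<times> {0..<m}) \<and> length P = n}"
    using linear_order_onD(1) unfolding is_election_def by blast
  show "finite {P. set P \<subseteq> Pow ({0..<m} \<times> {0..<m}) \<and> length P = n}"
    by (intro finite_lists_length_eq) simp
qed

definition relative_encoding :: "nat \<Rightarrow> nat rel list \<Rightarrow> nat rel \<times> (nat \<times> nat) set list" where
  "relative_encoding m P = (hd P, map (relative_perm_matrix m (hd P)) (tl P))"

lemma inj_on_relative_encoding:
  assumes "n > 0"
  shows "inj_on (relative_encoding m) {P. is_election n m P}"
proof (rule inj_onI)
  fix P P' assume "P \<in> {P. is_election n m P}" and "P' \<in> {P. is_election n m P}"
    and eq: "relative_encoding m P = relative_encoding m P'"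
  then have ne: "P \<noteq> []" "P' \<noteq> []"
    and orders: "set P \<subseteq> {V. linear_order_on {0..<m} V}" "set P' \<subseteq> {V. linear_order_on {0..<m} V}"
    using \<open>n > 0\<close> unfolding is_election_def by auto
  have hd: "hd P = hd P'" and "map (relative_perm_matrix m (hd P)) (tl P)
      = map (relative_perm_matrix m (hd P)) (tl P')"
    using eq unfolding relative_encoding_def by auto
  moreover have "inj_on (relative_perm_matrix m (hd P)) (set (tl P) \<union> set (tl P'))"
  proof (rule inj_on_subset[OF inj_on_relative_perm_matrix])
    show "linear_order_on {0..<m} (hd P)"
      using ne orders hd_in_set by blast
    show "set (tl P) \<union> set (tl P') \<subseteq> {V. linear_order_on {0..<m} V}"
      using ne orders by (meson Un_least list.set_sel(2) subset_iff)
  qed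
  ultimately have "tl P = tl P'"
    by (simp add: inj_on_map_eq_map)
  with hd ne show "P = P'"
    by (metis list.collapse)
qed

lemma relative_perm_matrix_in_avoiders:
  assumes P: "is_election n m P" and avoid: "\<not> contains_config n m P (S, [T1, T2])"
    and T1: "linear_order_on S T1" and T2: "linear_order_on S T2" and "finite S"
    and "V \<in> set (tl P)"
  shows "relative_perm_matrix m (hd P) V \<in> avoiders m S (rank T1) (rank T2)"
proof -
  obtain i where "i < length (tl P)" "V = tl P ! i"
    using \<open>V \<in> set (tl P)\<close> by (auto simp: in_set_conv_nth)
  then have i: "Suc i < n" "V = P ! Suc i"
    using P unfolding is_election_def by (auto simp: nth_tl)
  then have "hd P = P ! 0"
    using P unfolding is_election_def by (intro hd_conv_nth) auto
  have "P ! 0 \<in> set P" "P ! Suc i \<in> set P"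
    using P i(1) unfolding is_election_def by simp_all
  then have "linear_order_on {0..<m} (P ! 0)" "linear_order_on {0..<m} V"
    using P i(2) unfolding is_election_def by blast+
  moreover have "\<not> contains_pattern (relative_perm_matrix m (P ! 0) V) S (rank T1) (rank T2)"
    using avoid i contains_config_if_contains_pattern[OF P _ i(1) _ T1 T2 \<open>finite S\<close>] by auto
  ultimately show ?thesis
    using relative_perm_matrix_subset \<open>hd P = P ! 0\<close> unfolding avoiders_def by auto
qed

lemma card_elections_avoiding_le:
  assumes T1: "linear_order_on S T1" and T2: "linear_order_on S T2" and "finite S" and "n > 0"
  shows "card {P. is_election n m P \<and> \<not> contains_config n m P (S, [T1, T2])}
    \<le> fact m * card (avoiders m S (rank T1) (rank T2)) ^ (n - 1)"
proof -
  let ?X = "{P. is_election n m P \<and> \<not> contains_config n m P (S, [T1, T2])}"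
  let ?L = "{V. linear_order_on {0..<m} V}"
  let ?Q = "avoiders m S (rank T1) (rank T2)"
  have "relative_encoding m ` ?X \<subseteq> ?L \<times> {Ms. set Ms \<subseteq> ?Q \<and> length Ms = n - 1}"
  proof
    fix E assume "E \<in> relative_encoding m ` ?X"
    then obtain P where P: "is_election n m P" "\<not> contains_config n m P (S, [T1, T2])"
      and E: "E = relative_encoding m P"
      by blast
    then have "hd P \<in> ?L" "length (tl P) = n - 1"
      using \<open>n > 0\<close> hd_in_set[of P] unfolding is_election_def by auto
    with relative_perm_matrix_in_avoiders[OF P T1 T2 \<open>finite S\<close>]
    show "E \<in> ?L \<times> {Ms. set Ms \<subseteq> ?Q \<and> length Ms = n - 1}"
      unfolding E relative_encoding_def by auto
  qed
  moreover have "inj_on (relative_encoding m) ?X"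
    using inj_on_relative_encoding[OF \<open>n > 0\<close>] by (rule inj_on_subset) blast
  moreover have "finite ?L"
    by (rule finite_subset[of _ "Pow ({0..<m} \<times> {0..<m})"]) (auto dest: linear_order_onD(1))
  then have "finite (?L \<times> {Ms. set Ms \<subseteq> ?Q \<and> length Ms = n - 1})"
    using finite_lists_length_eq[OF finite_avoiders] by blast
  ultimately have "card ?X \<le> card (?L \<times> {Ms. set Ms \<subseteq> ?Q \<and> length Ms = n - 1})"
    by (intro card_inj_on_le)
  also have "\<dots> = card ?L * card ?Q ^ (n - 1)"
    by (simp add: card_cartesian_product card_lists_length_eq finite_avoiders)
  also have "\<dots> \<le> fact m * card ?Q ^ (n - 1)"
    using card_linear_orders_le by (rule mult_le_mono1)
  finally show ?thesis .
qed

lemma card_avoiding_elections_le: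
  assumes "k \<ge> 2" and "(S, [T1, T2]) \<in> \<Gamma>" and "is_configuration (S, [T1, T2])" and "card S = k"
    and "n > 0" and "m > 0"
  shows "card (avoiding_elections n m \<Gamma>) \<le> fact m * (2 ^ (klazar_const k * k\<^sup>2)) ^ ((n - 1) * m)"
proof -
  have T: "linear_order_on S T1" "linear_order_on S T2" "finite S"
    using \<open>is_configuration (S, [T1, T2])\<close> unfolding is_configuration_def by auto
  have "rank T1 ` S \<subseteq> {..<k}" "rank T2 ` S \<subseteq> {..<k}"
    using rank_less_card[OF T(1,3)] rank_less_card[OF T(2,3)] \<open>card S = k\<close> by auto
  then have card_avoiders:
      "card (avoiders m S (rank T1) (rank T2)) \<le> (2 ^ (klazar_const k * k\<^sup>2)) ^ m"
    using \<open>m > 0\<close> by (rule card_avoiders_le[OF \<open>k \<ge> 2\<close>])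
  have "avoiding_elections n m \<Gamma> \<subseteq> {P. is_election n m P \<and> \<not> contains_config n m P (S, [T1, T2])}"
    using \<open>(S, [T1, T2]) \<in> \<Gamma>\<close> unfolding avoiding_elections_def by blast
  then have "card (avoiding_elections n m \<Gamma>)
      \<le> card {P. is_election n m P \<and> \<not> contains_config n m P (S, [T1, T2])}"
    by (rule card_mono[rotated]) (rule finite_subset[OF _ finite_elections[of n m]], blast)
  also have "\<dots> \<le> fact m * card (avoiders m S (rank T1) (rank T2)) ^ (n - 1)"
    using \<open>n > 0\<close> by (rule card_elections_avoiding_le[OF T])
  also have "\<dots> \<le> fact m * ((2 ^ (klazar_const k * k\<^sup>2)) ^ m) ^ (n - 1)"
    using card_avoiders by (intro mult_le_mono2 power_mono) simp_all
  also have "\<dots> = fact m * (2 ^ (klazar_const k * k\<^sup>2)) ^ ((n - 1) * m)"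
    by (simp only: power_mult[symmetric] ac_simps)
  finally show ?thesis .
qed

theorem mainTheorem4:
  fixes k :: nat
  assumes "k \<ge> 2"
  shows "\<exists>c::real. \<forall>\<Gamma>.
     (\<forall>ST\<in>\<Gamma>. is_configuration ST) \<and>
     (\<exists>S T. (S, T) \<in> \<Gamma> \<and> card S = k \<and> length T = 2) \<longrightarrow>
     (\<forall>n m. n > 0 \<and> m > 0 \<longrightarrow>
        real (card (avoiding_elections n m \<Gamma>)) \<le> fact m * c ^ ((n - 1) * m))"
proof (intro exI[of _ "real (2 ^ (klazar_const k * k\<^sup>2))"] allI impI)
  fix \<Gamma> :: "(nat set \<times> nat rel list) set" and n m :: nat
  assume \<Gamma>: "(\<forall>ST\<in>\<Gamma>. is_configuration ST) \<and> (\<exists>S T. (S, T) \<in> \<Gamma> \<and> card S = k \<and> length T = 2)"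
    and nm: "n > 0 \<and> m > 0"
  then obtain S T where ST: "(S, T) \<in> \<Gamma>" "card S = k" "length T = 2"
    by blast
  then obtain T1 T2 where "T = [T1, T2]"
    by (metis length_0_conv length_Suc_conv numeral_2_eq_2)
  with \<Gamma> ST nm have "card (avoiding_elections n m \<Gamma>)
      \<le> fact m * (2 ^ (klazar_const k * k\<^sup>2)) ^ ((n - 1) * m)"
    by (intro card_avoiding_elections_le[OF \<open>k \<ge> 2\<close>]) auto
  then have "real (card (avoiding_elections n m \<Gamma>))
      \<le> real (fact m * (2 ^ (klazar_const k * k\<^sup>2)) ^ ((n - 1) * m))"
    by (simp only: of_nat_le_iff)
  then show "real (card (avoiding_elections n m \<Gamma>))
      \<le> fact m * real (2 ^ (klazar_const k * k\<^sup>2)) ^ ((n - 1) * m)"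
    by (simp only: of_nat_mult of_nat_fact of_nat_power)
qed

end
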